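(* Let $0<q<1$ and take $p=q$. Let $\tilde P_n(x)=\sum_{k=0}^n\tilde b_{k,n}x^k$ be the orthonormal polynomials (positive leading coefficients) for the moment sequence $\tilde s_0=q^{-1/2}(1-(1-q))=q^{1/2}$, $\tilde s_n=(q;q)_nq^{-(n+1)^2/2}$ ($n\ge1$), and let $b_{k,n}=(-1)^{n+k}q^{n/2+1/4}\begin{bmatrix}n\\k\end{bmatrix}_q\frac{q^{k^2+k/2}}{(q;q)_k}$ be the coefficients of the orthonormal polynomials for $s_n=(q;q)_nq^{-(n+1)^2/2}$. Then for $0\le k\le n$, \[ \tilde b_{k,n}=\tilde C_n (-1)^k\begin{bmatrix}n\\k\end{bmatrix}_q \frac{q^{k^2+k/2}}{(q;q)_{k+1}}\left[1-q^{k+1}-(1-q^k)(1-q^{n+1})\right],\qquad \tilde C_n=(-1)^n q^{-n/2-1/4}, \] i.e. $\tilde b_{k,n}=b_{k,n}\,q^{-n-1/2}\left[1-\frac{(1-q^k)(1-q^{n+1})}{1-q^{k+1}}\right]$. Moreover $\tilde D_n=q^{n+1}D_n$ where $D_n=\det(s_{i+j})_{0\le i,j\le n}$, $\tilde D_n=\det(\tilde s_{i+j})_{0\le i,j\le n}$. Finally, the monic polynomials $\tilde p_n=\tilde P_n/\tilde b_{n,n}$ satisfy $\tilde p_n(x)=(x-\tilde c_n)\tilde p_{n-1}(x)-\tilde\lambda_n\tilde p_{n-2}(x)$ ($n\ge1$, $\tilde p_{-1}=0$, $\tilde p_0=1$) with \[ \tilde c_n=\left(1+q^3-(1+q^2)q^n\right)q^{-2n-1/2},\qquad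 \tilde \lambda_{n+1}=(1-q^n)^2q^{-4n}. \]
   Context: $(a;q)_n=\prod_{k=1}^n(1-aq^{k-1})$ for $n\in\{0,1,\dots\}\cup\{\infty\}$; $\begin{bmatrix}n\\k\end{bmatrix}_q=\frac{(q;q)_n}{(q;q)_k(q;q)_{n-k}}$. Orthonormal polynomials for a positive definite moment sequence $(u_n)$ are $P_n(x)=\frac{1}{\sqrt{E_{n-1}E_n}}\det\begin{pmatrix}u_0&\cdots&u_n\\ \vdots&&\vdots\\ u_{n-1}&\cdots&u_{2n-1}\\ 1&\cdots&x^n\end{pmatrix}$, $E_n=\det(u_{i+j})_{0\le i,j\le n}$, $E_{-1}=1$. *)

theory Defs
  imports "HOL-Computational_Algebra.Polynomial" "Jordan_Normal_Form.Determinant"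
begin

definition qpoch :: "real \<Rightarrow> real \<Rightarrow> nat \<Rightarrow> real" where
  "qpoch a q n = (\<Prod>k<n. 1 - a * q ^ k)"

definition qbinom :: "real \<Rightarrow> nat \<Rightarrow> nat \<Rightarrow> real" where
  "qbinom q n k = qpoch q q n / (qpoch q q k * qpoch q q (n - k))"

text \<open>Hankel determinant of size m: det (u_{i+j})_{0<=i,j<m}.
  Hence E_n = hankel_det u (n+1), and E_{-1} = hankel_det u 0 = 1.\<close>
definition hankel_det :: "(nat \<Rightarrow> real) \<Rightarrow> nat \<Rightarrow> real" where
  "hankel_det u m = det (mat m m (\<lambda>(i, j). u (i + j)))"

definition orthonormal_poly :: "(nat \<Rightarrow> real) \<Rightarrow> nat \<Rightarrow> real poly" where
  "orthonormal_poly u n =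
     smult (1 / sqrt (hankel_det u n * hankel_det u (Suc n)))
       (det (mat (Suc n) (Suc n)
          (\<lambda>(i, j). if i < n then [:u (i + j):] else monom 1 j)))"

definition mom_s :: "real \<Rightarrow> nat \<Rightarrow> real" where
  "mom_s q n = qpoch q q n * q powr (- (real (n + 1))\<^sup>2 / 2)"

definition mom_st :: "real \<Rightarrow> nat \<Rightarrow> real" where
  "mom_st q n = (if n = 0 then q powr (-1/2) * (1 - (1 - q)) else mom_s q n)"

end

theory Submission
  imports Defs
begin

text \<open>
  For the moments s_n = (q;q)_n q^(-(n+1)^2/2) the sum of b_{k,n} s_(i+k) over k is, up to a factor
  independent of k, the n-th q-difference of a polynomial of degree i evaluated at the nodes q^-k, so
  by the q-binomial theorem it vanishes for i < n. The same mechanism works for the modified moments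
  s~ and the proposed coefficients b~_{k,n} when i >= 1 (now with a polynomial of degree i + 1); for
  i = 0 the change of s_0 is compensated by two alternating q-binomial sums. An upper triangular
  coefficient array orthogonal to the moments triangularises the Hankel matrix, which yields the Hankel
  determinants and identifies the determinant formula for P~_n with the proposed polynomial. Finally,
  a polynomial of degree < m orthogonal to 1, ..., x^(m-1) vanishes, so the three-term recurrence
  reduces to two explicit identities for L(x^n p~_n) and L(x^(n+1) p~_n).
\<close>

section \<open>Orthogonal coefficient arrays\<close>

text \<open>moment_functional u i p is L(x^i p) for the linear functional L with moments u.\<close>
definition moment_functional :: "(nat \<Rightarrow> real) \<Rightarrow> nat \<Rightarrow> real poly \<Rightarrow> real" where
  "moment_functional u i p = (\<Sum>j\<le>degree p. coeff p j * u (i + j))"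

lemma moment_functional_bound:
  "degree p \<le> N \<Longrightarrow> moment_functional u i p = (\<Sum>j\<le>N. coeff p j * u (i + j))"
  unfolding moment_functional_def by (rule sum.mono_neutral_left) (auto simp: coeff_eq_0)

lemma moment_functional_add:
  "moment_functional u i (p + r) = moment_functional u i p + moment_functional u i r"
proof -
  let ?N = "max (degree p) (degree r)"
  have "degree (p + r) \<le> ?N" by (rule degree_add_le) auto
  then show ?thesis
    by (simp add: moment_functional_bound[of _ ?N] sum.distrib algebra_simps)
qed

lemma moment_functional_smult:
  "moment_functional u i (smult a p) = a * moment_functional u i p"
  using moment_functional_bound[of "smult a p" "degree p"]
  by (simp add: moment_functional_def sum_distrib_left mult_ac)

lemma moment_functional_diff:
  "moment_functional u i (p - r) = moment_functional u i p - moment_functional u i r"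
proof -
  have "p - r = p + smult (-1) r" by simp
  then show ?thesis by (simp only: moment_functional_add moment_functional_smult)
qed

lemma coeff_linear_mult:
  "coeff ([:a, b:] * p) j = a * coeff p j + b * (case j of 0 \<Rightarrow> 0 | Suc i \<Rightarrow> coeff p i)"
  by (cases j) (simp_all add: coeff_pCons)

lemma moment_functional_linear_mult:
  "moment_functional u i ([:a, b:] * p) = a * moment_functional u i p + b * moment_functional u (Suc i) p"
proof -
  let ?N = "Suc (degree p)"
  have "degree [:a, b:] \<le> 1" by (rule degree_le) (auto simp: coeff_pCons split: nat.split)
  then have deg: "degree ([:a, b:] * p) \<le> ?N"
    using degree_mult_le[of "[:a, b:]" p] by linarith
  have "moment_functional u i ([:a, b:] * p)
      = (\<Sum>j\<le>?N. a * coeff p j * u (i + j))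
        + (\<Sum>j\<le>?N. b * (case j of 0 \<Rightarrow> 0 | Suc m \<Rightarrow> coeff p m) * u (i + j))"
    unfolding moment_functional_bound[OF deg] coeff_linear_mult by (simp add: sum.distrib algebra_simps)
  also have "(\<Sum>j\<le>?N. a * coeff p j * u (i + j)) = a * moment_functional u i p"
    using moment_functional_bound[of p ?N u i] by (simp add: sum_distrib_left mult_ac del: sum.atMost_Suc)
  also have "(\<Sum>j\<le>?N. b * (case j of 0 \<Rightarrow> 0 | Suc m \<Rightarrow> coeff p m) * u (i + j))
      = b * moment_functional u (Suc i) p"
    by (subst sum.atMost_Suc_shift) (simp add: moment_functional_def sum_distrib_left mult_ac)
  finally show ?thesis .
qed

lemma coeff_sum_monom: "coeff (\<Sum>j\<le>n. monom (c j) j) k = (if k \<le> n then c k else 0)"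
  by (simp add: coeff_sum coeff_monom)

lemma degree_sum_monom_le: "degree (\<Sum>j\<le>n. monom (c j) j :: real poly) \<le> n"
  by (rule degree_le) (auto simp: coeff_sum_monom)

lemma moment_functional_sum_monom:
  "moment_functional u i (\<Sum>j\<le>n. monom (c j) j) = (\<Sum>j\<le>n. c j * u (i + j))"
  by (simp add: moment_functional_bound[OF degree_sum_monom_le] coeff_sum_monom)

text \<open>Multiplying M by the upper triangular matrix with columns C k makes it lower triangular.\<close>
lemma det_mult_triangular_orthogonal:
  fixes M :: "'a::comm_ring_1 mat" and C :: "nat \<Rightarrow> nat \<Rightarrow> 'a"
  assumes M: "M \<in> carrier_mat m m"
    and orth: "\<And>i k. i < k \<Longrightarrow> k < m \<Longrightarrow> (\<Sum>j<m. M $$ (i, j) * C k j) = 0"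
    and tri: "\<And>k j. k < j \<Longrightarrow> j < m \<Longrightarrow> C k j = 0"
  shows "det M * (\<Prod>k<m. C k k) = (\<Prod>k<m. \<Sum>j<m. M $$ (k, j) * C k j)"
proof -
  define B where "B = mat m m (\<lambda>(j, k). C k j)"
  have B: "B \<in> carrier_mat m m" unfolding B_def by simp
  have det_B: "det B = (\<Prod>k<m. C k k)"
    by (subst det_upper_triangular[OF _ B])
       (auto simp: B_def upper_triangular_def prod_list_diag_prod tri atLeast0LessThan)
  have entry: "(M * B) $$ (i, k) = (\<Sum>j<m. M $$ (i, j) * C k j)" if "i < m" "k < m" for i k
    using that M by (auto simp: B_def scalar_prod_def atLeast0LessThan intro!: sum.cong)
  have MB: "M * B \<in> carrier_mat m m" using M B by simp
  have "det (M * B) = (\<Prod>k<m. \<Sum>j<m. M $$ (k, j) * C k j)"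
    by (subst det_lower_triangular[OF _ MB])
       (use M in \<open>auto simp: entry orth prod_list_diag_prod atLeast0LessThan intro!: prod.cong\<close>)
  moreover have "det (M * B) = det M * det B" by (rule det_mult[OF M B])
  ultimately show ?thesis using det_B by simp
qed

locale orthogonal_coefficients =
  fixes u :: "nat \<Rightarrow> real" and c :: "nat \<Rightarrow> nat \<Rightarrow> real"
  assumes upper_zero: "k < j \<Longrightarrow> c k j = 0"
    and orthogonal: "i < k \<Longrightarrow> (\<Sum>j\<le>k. c k j * u (i + j)) = 0"
    and sqnorm_pos: "(\<Sum>j\<le>k. c k j * u (k + j)) / c k k > 0"
begin

definition orth_poly :: "nat \<Rightarrow> real poly" where
  "orth_poly k = (\<Sum>j\<le>k. monom (c k j) j)"

definition sqnorm :: "nat \<Rightarrow> real" where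
  "sqnorm k = (\<Sum>j\<le>k. c k j * u (k + j)) / c k k"

lemma diag_nonzero: "c k k \<noteq> 0"
  using sqnorm_pos[of k] by auto \<comment> \<open>division by zero yields 0\<close>

lemma sum_upto_diag:
  "k < m \<Longrightarrow> (\<Sum>j<m. u (i + j) * c k j) = (\<Sum>j\<le>k. c k j * u (i + j))"
  by (subst sum.mono_neutral_right[of "{..<m}" "{..k}"]) (auto simp: upper_zero mult.commute)

lemma hankel_det_mult_diag:
  "hankel_det u m * (\<Prod>k<m. c k k) = (\<Prod>k<m. \<Sum>j\<le>k. c k j * u (k + j))"
proof -
  have "det (mat m m (\<lambda>(i, j). u (i + j))) * (\<Prod>k<m. c k k)
        = (\<Prod>k<m. \<Sum>j<m. mat m m (\<lambda>(i, j). u (i + j)) $$ (k, j) * c k j)"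
    by (rule det_mult_triangular_orthogonal) (auto simp: sum_upto_diag orthogonal upper_zero)
  also have "\<dots> = (\<Prod>k<m. \<Sum>j\<le>k. c k j * u (k + j))"
    by (rule prod.cong) (auto simp: sum_upto_diag[symmetric] intro!: sum.cong)
  finally show ?thesis unfolding hankel_det_def .
qed

lemma hankel_det_eq_prod_sqnorm: "hankel_det u m = (\<Prod>k<m. sqnorm k)"
  using hankel_det_mult_diag[of m] diag_nonzero
  by (simp add: sqnorm_def prod_dividef field_simps)

lemma det_poly_mult_diag:
  "det (mat (Suc n) (Suc n) (\<lambda>(i, j). if i < n then [:u (i + j):] else monom 1 j))
     * [:\<Prod>k\<le>n. c k k:]
   = [:\<Prod>k<n. \<Sum>j\<le>k. c k j * u (k + j):] * orth_poly n"
proof -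
  let ?M = "mat (Suc n) (Suc n) (\<lambda>(i, j). if i < n then [:u (i + j):] else monom 1 j)"
  let ?C = "\<lambda>k j. [:c k j:]"
  have row: "(\<Sum>j<Suc n. ?M $$ (i, j) * ?C k j) = [:\<Sum>j\<le>k. c k j * u (i + j):]"
    if "i < n" "k < Suc n" for i k
  proof -
    have "(\<Sum>j<Suc n. ?M $$ (i, j) * ?C k j) = (\<Sum>j<Suc n. [:u (i + j) * c k j:])"
      using that by (intro sum.cong) auto
    also have "\<dots> = [:\<Sum>j<Suc n. u (i + j) * c k j:]"
      by (simp only: sum_to_poly)
    finally show ?thesis using sum_upto_diag[OF that(2)] by simp
  qed
  have last_row: "(\<Sum>j<Suc n. ?M $$ (n, j) * ?C k j) = orth_poly k" if "k < Suc n" for k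
  proof -
    have "(\<Sum>j<Suc n. ?M $$ (n, j) * ?C k j) = (\<Sum>j<Suc n. monom (c k j) j)"
      by (intro sum.cong) (auto simp: smult_monom)
    also have "\<dots> = orth_poly k"
      unfolding orth_poly_def by (rule sum.mono_neutral_right) (use that upper_zero in auto)
    finally show ?thesis .
  qed
  have "det ?M * (\<Prod>k<Suc n. ?C k k) = (\<Prod>k<Suc n. \<Sum>j<Suc n. ?M $$ (k, j) * ?C k j)"
  proof (rule det_mult_triangular_orthogonal)
    fix i k assume "i < k" "k < Suc n"
    then show "(\<Sum>j<Suc n. ?M $$ (i, j) * ?C k j) = 0"
      using row[of i k] orthogonal[of i k] by simp
  qed (auto simp: upper_zero)
  also have "\<dots> = (\<Prod>k<n. [:\<Sum>j\<le>k. c k j * u (k + j):]) * orth_poly n"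
  proof -
    have "(\<Prod>k<n. \<Sum>j<Suc n. ?M $$ (k, j) * ?C k j) = (\<Prod>k<n. [:\<Sum>j\<le>k. c k j * u (k + j):])"
      by (rule prod.cong[OF refl], rule row) auto
    then show ?thesis by (simp only: prod.lessThan_Suc last_row[OF lessI])
  qed
  finally show ?thesis
    by (simp add: lessThan_Suc_atMost prod_to_poly)
qed

lemma orthonormal_poly_eq:
  "orthonormal_poly u n = smult (1 / (c n n * sqrt (sqnorm n))) (orth_poly n)"
proof -
  define E where "E = (\<Prod>k<n. sqnorm k)"
  have E_pos: "E > 0" unfolding E_def using sqnorm_pos by (intro prod_pos) (auto simp: sqnorm_def)
  have sqrt_eq: "sqrt (hankel_det u n * hankel_det u (Suc n)) = E * sqrt (sqnorm n)"
  proof -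
    have "hankel_det u n * hankel_det u (Suc n) = E\<^sup>2 * sqnorm n"
      by (simp add: hankel_det_eq_prod_sqnorm E_def power2_eq_square)
    then show ?thesis using E_pos by (simp add: real_sqrt_mult)
  qed
  let ?D = "det (mat (Suc n) (Suc n) (\<lambda>(i, j). if i < n then [:u (i + j):] else monom 1 j))"
  have "(\<Prod>k<n. \<Sum>j\<le>k. c k j * u (k + j)) = E * (\<Prod>k<n. c k k)"
    unfolding E_def sqnorm_def using diag_nonzero by (simp add: prod_dividef)
  moreover have "(\<Prod>k\<le>n. c k k) = (\<Prod>k<n. c k k) * c n n"
    by (simp add: lessThan_Suc_atMost[symmetric])
  ultimately have "smult (\<Prod>k\<le>n. c k k) ?D
      = smult (\<Prod>k\<le>n. c k k) (smult (E / c n n) (orth_poly n))"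
    using det_poly_mult_diag[of n] diag_nonzero[of n]
    by (simp add: smult_smult mult.commute)
  moreover have "(\<Prod>k\<le>n. c k k) \<noteq> 0" using diag_nonzero by simp
  ultimately have "?D = smult (E / c n n) (orth_poly n)"
    by (rule smult_cancel[rotated])
  then show ?thesis
    unfolding orthonormal_poly_def sqrt_eq using E_pos by (simp add: smult_smult field_simps)
qed

definition monic :: "nat \<Rightarrow> real poly" where
  "monic k = smult (1 / c k k) (orth_poly k)"

lemma coeff_monic_self: "coeff (monic k) k = 1"
  unfolding monic_def orth_poly_def using diag_nonzero[of k] by (simp add: coeff_sum_monom)

lemma coeff_monic_eq_0: "k < j \<Longrightarrow> coeff (monic k) j = 0"
  unfolding monic_def orth_poly_def by (simp add: coeff_sum_monom)

lemma moment_functional_monic: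
  "moment_functional u i (monic k) = (\<Sum>j\<le>k. c k j * u (i + j)) / c k k"
  unfolding monic_def orth_poly_def moment_functional_smult moment_functional_sum_monom by simp

lemma moment_functional_monic_orthogonal: "i < k \<Longrightarrow> moment_functional u i (monic k) = 0"
  by (simp add: moment_functional_monic orthogonal)

lemma moment_functional_monic_self: "moment_functional u k (monic k) = sqnorm k"
  by (simp add: moment_functional_monic sqnorm_def)

lemma eq_0_if_orthogonal_to_lower:
  "(\<forall>j\<ge>m. coeff r j = 0) \<Longrightarrow> (\<forall>i<m. moment_functional u i r = 0) \<Longrightarrow> r = 0"
proof (induction m arbitrary: r)
  case 0
  then show ?case by (simp add: poly_eq_iff)
next
  case (Suc m)
  define r' where "r' = r - smult (coeff r m) (monic m)"
  have "\<forall>j\<ge>m. coeff r' j = 0"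
  proof (intro allI impI)
    fix j assume "m \<le> j"
    then show "coeff r' j = 0"
      using Suc.prems(1) coeff_monic_self[of m] coeff_monic_eq_0[of m j]
      by (cases "j = m") (auto simp: r'_def)
  qed
  moreover have "\<forall>i<m. moment_functional u i r' = 0"
    using Suc.prems(2) moment_functional_monic_orthogonal
    by (simp add: r'_def moment_functional_diff moment_functional_smult)
  ultimately have "r' = 0" by (rule Suc.IH)
  then have r: "r = smult (coeff r m) (monic m)" by (simp add: r'_def)
  have "coeff r m * sqnorm m = moment_functional u m r"
    by (subst (2) r) (simp add: moment_functional_smult moment_functional_monic_self)
  also have "\<dots> = 0" using Suc.prems(2) by simp
  finally have "coeff r m = 0" using sqnorm_pos[of m] by (auto simp: sqnorm_def)
  then show ?case by (subst r) simp
qed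

lemma monic_0: "monic 0 = 1"
  unfolding monic_def orth_poly_def using diag_nonzero[of 0] by (simp add: monom_0)

lemma coeff_monic_Suc_diff_eq_0:
  assumes "m + 1 \<le> j"
  shows "coeff (monic (m + 1) - [:- a, 1:] * monic m) j = 0"
proof (cases j)
  case (Suc i)
  then show ?thesis
    unfolding coeff_diff coeff_linear_mult
    using assms coeff_monic_self[of "m + 1"] coeff_monic_self[of m] coeff_monic_eq_0[of "m + 1" j]
      coeff_monic_eq_0[of m]
    by (cases "i = m") auto
qed (use assms in simp)

lemma monic_1:
  assumes "moment_functional u 1 (monic 0) = a * sqnorm 0"
  shows "monic 1 = [:- a, 1:] * monic 0"
proof -
  define r where "r = monic 1 - [:- a, 1:] * monic 0"
  have "\<forall>j\<ge>1. coeff r j = 0"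
    using coeff_monic_Suc_diff_eq_0[of 0] by (simp add: r_def)
  moreover have "\<forall>i<1. moment_functional u i r = 0"
    unfolding r_def moment_functional_diff moment_functional_linear_mult
    using assms moment_functional_monic_self[of 0] moment_functional_monic_orthogonal[of 0 1]
    by simp
  ultimately have "r = 0" by (rule eq_0_if_orthogonal_to_lower)
  then show ?thesis unfolding r_def by simp
qed

lemma monic_three_term_recurrence:
  assumes "l * sqnorm n = sqnorm (n + 1)"
    and "moment_functional u (n + 2) (monic (n + 1))
           = a * sqnorm (n + 1) + l * moment_functional u (n + 1) (monic n)"
  shows "monic (n + 2) = [:- a, 1:] * monic (n + 1) - smult l (monic n)"
proof -
  define r where "r = monic (n + 2) - ([:- a, 1:] * monic (n + 1) - smult l (monic n))"
  have "\<forall>j\<ge>n + 2. coeff r j = 0"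
  proof (intro allI impI)
    fix j :: nat assume "n + 2 \<le> j"
    then have "coeff (monic (n + 1 + 1) - [:- a, 1:] * monic (n + 1)) j = 0"
      by (intro coeff_monic_Suc_diff_eq_0) simp
    then show "coeff r j = 0"
      using \<open>n + 2 \<le> j\<close> coeff_monic_eq_0[of n j] by (simp add: r_def algebra_simps)
  qed
  moreover have "\<forall>i<n + 2. moment_functional u i r = 0"
  proof (intro allI impI)
    fix i assume "i < n + 2"
    have L: "moment_functional u i r = moment_functional u i (monic (n + 2))
        - (- a * moment_functional u i (monic (n + 1)) + moment_functional u (Suc i) (monic (n + 1)))
        + l * moment_functional u i (monic n)"
      unfolding r_def moment_functional_diff moment_functional_linear_mult moment_functional_smult
      by simp
    consider "i < n" | "i = n" | "i = n + 1" using \<open>i < n + 2\<close> by linarith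
    then show "moment_functional u i r = 0"
      unfolding L using assms moment_functional_monic_self[of n] moment_functional_monic_self[of "n + 1"]
      by cases (simp_all add: moment_functional_monic_orthogonal)
  qed
  ultimately have "r = 0" by (rule eq_0_if_orthogonal_to_lower)
  then show ?thesis unfolding r_def by simp
qed

end

section \<open>q-calculus\<close>

lemma qpoch_0 [simp]: "qpoch a q 0 = 1"
  by (simp add: qpoch_def)

lemma qpoch_Suc: "qpoch a q (Suc n) = qpoch a q n * (1 - a * q ^ n)"
  by (simp add: qpoch_def)

lemma qpoch_Suc_shift: "qpoch a q (Suc n) = (1 - a) * qpoch (a * q) q n"
  unfolding qpoch_def by (subst prod.lessThan_Suc_shift) (simp add: mult.assoc)

lemma qpoch_add: "qpoch a q (k + i) = qpoch a q k * (\<Prod>j<i. 1 - a * q ^ (k + j))"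
  by (induction i) (simp_all add: qpoch_Suc)

definition root_poly :: "(nat \<Rightarrow> real) \<Rightarrow> nat \<Rightarrow> real poly" where
  "root_poly a m = (\<Prod>j<m. [:- a j, 1:])"

lemma root_poly_Suc: "root_poly a (Suc m) = [:- a m, 1:] * root_poly a m"
  by (simp add: root_poly_def)

lemma degree_root_poly_le: "degree (root_poly a m) \<le> m"
proof (induction m)
  case 0
  then show ?case by (simp add: root_poly_def)
next
  case (Suc m)
  have "degree (root_poly a (Suc m)) \<le> degree [:- a m, 1:] + degree (root_poly a m)"
    unfolding root_poly_Suc by (rule degree_mult_le)
  then show ?case using Suc by simp
qed

lemma coeff_root_poly_self: "coeff (root_poly a m) m = 1"
proof (induction m)
  case 0
  then show ?case by (simp add: root_poly_def)
next
  case (Suc m)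
  have "coeff (root_poly a m) (Suc m) = 0"
    using degree_root_poly_le[of a m] by (simp add: coeff_eq_0)
  then show ?case unfolding root_poly_Suc coeff_linear_mult using Suc by simp
qed

lemma coeff_root_poly_pred: "coeff (root_poly a (Suc m)) m = - (\<Sum>j<Suc m. a j)"
proof (induction m)
  case 0
  then show ?case by (simp add: root_poly_def)
next
  case (Suc m)
  then show ?case
    unfolding root_poly_Suc[of a "Suc m"] coeff_linear_mult using coeff_root_poly_self[of a "Suc m"]
    by simp
qed

locale q_setting =
  fixes q :: real
  assumes q_pos: "0 < q" and q_less_1: "q < 1"
begin

lemma power_Suc_less_1: "q ^ Suc k < 1"
proof -
  have "q ^ k \<le> 1" using q_pos q_less_1 by (intro power_le_one) auto
  then have "q * q ^ k \<le> q" using q_pos by (simp add: mult_left_le)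
  then show ?thesis using q_less_1 by simp
qed

lemma qpoch_pos: "qpoch q q n > 0"
  unfolding qpoch_def using power_Suc_less_1 by (intro prod_pos) simp

lemma inverse_power_eq_powr: "(1 / q) ^ n = q powr (- real n)"
  using q_pos by (simp add: powr_minus_divide powr_realpow power_one_over)

lemma inverse_power_mult_power: "(1 / q) ^ n * q ^ n = 1"
  using q_pos by (simp add: power_one_over)

lemma qbinom_0 [simp]: "qbinom q n 0 = 1"
  unfolding qbinom_def using qpoch_pos[of n] by simp

lemma qbinom_self [simp]: "qbinom q n n = 1"
  unfolding qbinom_def using qpoch_pos[of n] by simp

lemma qbinom_Suc_Suc:
  assumes "k < n"
  shows "qbinom q (Suc n) (Suc k) = qbinom q n k + q ^ Suc k * qbinom q n (Suc k)"
proof -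
  obtain m where n: "n = Suc (k + m)" using assms by (metis less_iff_Suc_add)
  have nk: "Suc n - Suc k = Suc m" "n - k = Suc m" "n - Suc k = m" using n by auto
  define A where "A = q ^ k"
  define B where "B = q ^ m"
  define C where "C = 1 - q * A"
  define D where "D = 1 - q * B"
  have pk: "qpoch q q (Suc k) = qpoch q q k * C" by (simp add: qpoch_Suc A_def C_def)
  have pm: "qpoch q q (Suc m) = qpoch q q m * D" by (simp add: qpoch_Suc B_def D_def)
  have pn: "qpoch q q (Suc n) = qpoch q q n * (C + q * A * D)"
    by (simp add: qpoch_Suc n A_def B_def C_def D_def power_add algebra_simps)
  have "C \<noteq> 0" "D \<noteq> 0"
    using power_Suc_less_1[of k] power_Suc_less_1[of m] by (auto simp: A_def B_def C_def D_def)
  moreover have "qpoch q q k \<noteq> 0" "qpoch q q m \<noteq> 0" "qpoch q q n \<noteq> 0"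
    using qpoch_pos by (auto simp: less_le)
  moreover have "q ^ Suc k = q * A" by (simp add: A_def)
  ultimately show ?thesis
    unfolding qbinom_def nk pk pm pn by (simp add: field_simps A_def)
qed

lemma qbinom_Suc_Suc_eq:
  "k \<le> n \<Longrightarrow> qbinom q (Suc n) (Suc k) = qbinom q n k * (1 - q ^ (n + 1)) / (1 - q ^ (k + 1))"
  unfolding qbinom_def using qpoch_pos[of k] qpoch_pos[of "n - k"] power_Suc_less_1[of k]
  by (simp add: qpoch_Suc field_simps)

text \<open>For k > n, qbinom q n k does not vanish (n - k truncates to 0), hence the extension by zero.\<close>
definition qbinom_ext :: "nat \<Rightarrow> nat \<Rightarrow> real" where
  "qbinom_ext n k = (if k \<le> n then qbinom q n k else 0)"

lemma qbinom_ext_Suc_Suc: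
  "qbinom_ext (Suc n) (Suc k) = qbinom_ext n k + q ^ Suc k * qbinom_ext n (Suc k)"
  using qbinom_Suc_Suc[of k n] by (cases "k < n"; cases "k = n") (auto simp: qbinom_ext_def)

definition qtri :: "nat \<Rightarrow> real" where
  "qtri k = q powr (real k * (real k - 1) / 2)"

lemma qtri_0 [simp]: "qtri 0 = 1"
  using q_pos by (simp add: qtri_def)

lemma qtri_Suc: "qtri (Suc k) = qtri k * q ^ k"
proof -
  have "qtri (Suc k) = q powr (real k * (real k - 1) / 2 + real k)"
    unfolding qtri_def by (rule arg_cong[where f = "(powr) q"]) (simp add: field_simps)
  also have "\<dots> = qtri k * q ^ k" unfolding qtri_def using q_pos by (simp add: powr_add powr_realpow)
  finally show ?thesis .
qed

theorem q_binomial: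
  "(\<Sum>k\<le>n. (-1) ^ k * qbinom_ext n k * qtri k * z ^ k) = qpoch z q n"
proof (induction n arbitrary: z)
  case 0
  then show ?case by (simp add: qbinom_ext_def)
next
  case (Suc n)
  define g where "g m = (-1) ^ m * qbinom_ext n m * qtri m * (q * z) ^ m" for m
  have step: "(-1) ^ Suc k * qbinom_ext (Suc n) (Suc k) * qtri (Suc k) * z ^ Suc k
      = - z * g k + g (Suc k)" for k
    unfolding g_def qbinom_ext_Suc_Suc qtri_Suc by (simp add: algebra_simps power_mult_distrib)
  have "(\<Sum>k\<le>Suc n. (-1) ^ k * qbinom_ext (Suc n) k * qtri k * z ^ k)
      = 1 + (\<Sum>k\<le>n. - z * g k + g (Suc k))"
    by (subst sum.atMost_Suc_shift, simp only: step) (simp add: qbinom_ext_def)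
  also have "\<dots> = 1 - z * (\<Sum>k\<le>n. g k) + (\<Sum>k\<le>n. g (Suc k))"
    by (simp add: sum.distrib sum_distrib_left sum_negf sum_subtractf)
  also have "(\<Sum>k\<le>n. g (Suc k)) = (\<Sum>k\<le>Suc n. g k) - g 0"
    by (subst sum.atMost_Suc_shift) simp
  also have "(\<Sum>k\<le>Suc n. g k) = (\<Sum>k\<le>n. g k)"
    by (simp add: g_def qbinom_ext_def)
  also have "g 0 = 1" by (simp add: g_def qbinom_ext_def)
  also have "(\<Sum>k\<le>n. g k) = qpoch (z * q) q n"
    using Suc.IH[of "q * z"] by (simp add: g_def mult.commute)
  finally show ?case by (simp add: qpoch_Suc_shift algebra_simps)
qed

text \<open>The n-th q-difference of f on the nodes q^-k; by the q-binomial theorem it annihilates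
  every polynomial of degree less than n.\<close>
definition qdiff :: "nat \<Rightarrow> real poly \<Rightarrow> real" where
  "qdiff n f = (\<Sum>k\<le>n. (-1) ^ k * qbinom_ext n k * qtri k * poly f ((1 / q) ^ k))"

lemma qdiff_eq_sum_coeff:
  assumes "degree f \<le> N"
  shows "qdiff n f = (\<Sum>m\<le>N. coeff f m * qpoch ((1 / q) ^ m) q n)"
proof -
  have poly_f: "poly f x = (\<Sum>m\<le>N. coeff f m * x ^ m)" for x
    unfolding poly_altdef by (rule sum.mono_neutral_left) (use assms in \<open>auto simp: coeff_eq_0\<close>)
  have "qdiff n f = (\<Sum>k\<le>n. \<Sum>m\<le>N. coeff f m * ((-1) ^ k * qbinom_ext n k * qtri k * ((1 / q) ^ m) ^ k))"
    unfolding qdiff_def poly_f sum_distrib_left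
    by (intro sum.cong refl) (simp add: power_mult[symmetric] mult_ac)
  also have "\<dots> = (\<Sum>m\<le>N. coeff f m * qpoch ((1 / q) ^ m) q n)"
    by (subst sum.swap) (simp add: sum_distrib_left[symmetric] q_binomial)
  finally show ?thesis .
qed

lemma qpoch_inverse_power_eq_0: "m < n \<Longrightarrow> qpoch ((1 / q) ^ m) q n = 0"
  unfolding qpoch_def using inverse_power_mult_power[of m]
  by (intro prod_zero) (auto intro!: bexI[of _ m])

lemma qdiff_degree_le:
  assumes "degree f \<le> n"
  shows "qdiff n f = coeff f n * qpoch ((1 / q) ^ n) q n"
  unfolding qdiff_eq_sum_coeff[OF assms] by (cases n) (simp_all add: qpoch_inverse_power_eq_0)

lemma qdiff_degree_le_Suc:
  assumes "degree f \<le> Suc n"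
  shows "qdiff n f = coeff f n * qpoch ((1 / q) ^ n) q n + coeff f (Suc n) * qpoch ((1 / q) ^ Suc n) q n"
  unfolding qdiff_eq_sum_coeff[OF assms] by (cases n) (simp_all add: qpoch_inverse_power_eq_0)

lemma qpoch_inverse_power_add:
  "qpoch ((1 / q) ^ (n + d)) q n
   = (-1) ^ n * (\<Prod>j<n. (1 / q) ^ (j + 1 + d)) * (\<Prod>j<n. 1 - q ^ (j + 1 + d))"
proof -
  have "qpoch ((1 / q) ^ (n + d)) q n = (\<Prod>j<n. 1 - (1 / q) ^ (n + d) * q ^ (n - Suc j))"
    unfolding qpoch_def by (rule prod.nat_diff_reindex[symmetric])
  also have "\<dots> = (\<Prod>j<n. (-1) * ((1 / q) ^ (j + 1 + d) * (1 - q ^ (j + 1 + d))))"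
  proof (rule prod.cong[OF refl])
    fix j assume "j \<in> {..<n}"
    then have "n + d = (n - Suc j) + (j + 1 + d)" by simp
    then have "(1 / q) ^ (n + d) * q ^ (n - Suc j) = (1 / q) ^ (j + 1 + d)"
      using inverse_power_mult_power[of "n - Suc j"] by (simp only: power_add) (simp add: mult_ac)
    moreover have "\<And>X Y :: real. X * Y = 1 \<Longrightarrow> 1 - X = (-1) * (X * (1 - Y))"
      by (simp add: algebra_simps)
    ultimately show "1 - (1 / q) ^ (n + d) * q ^ (n - Suc j)
        = (-1) * ((1 / q) ^ (j + 1 + d) * (1 - q ^ (j + 1 + d)))"
      using inverse_power_mult_power[of "j + 1 + d"] by metis
  qed
  also have "\<dots> = (-1) ^ n * (\<Prod>j<n. (1 / q) ^ (j + 1 + d)) * (\<Prod>j<n. 1 - q ^ (j + 1 + d))"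
    by (simp only: prod.distrib prod_constant card_lessThan)
  finally show ?thesis .
qed

lemma prod_inverse_power:
  "(\<Prod>j<n. (1 / q) ^ (j + 1 + d)) = q powr (- (real n * (real n + 1) / 2 + real n * real d))"
proof (induction n)
  case 0
  then show ?case using q_pos by simp
next
  case (Suc n)
  have "(\<Prod>j<Suc n. (1 / q) ^ (j + 1 + d))
      = q powr (- (real n * (real n + 1) / 2 + real n * real d)) * q powr (- real (n + 1 + d))"
    by (simp only: prod.lessThan_Suc Suc.IH, simp only: inverse_power_eq_powr)
  also have "\<dots> = q powr (- (real (Suc n) * (real (Suc n) + 1) / 2 + real (Suc n) * real d))"
    unfolding powr_add[symmetric] by (rule arg_cong[where f = "(powr) q"]) (simp add: field_simps)
  finally show ?case .
qed

lemma qpoch_inverse_power_self: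
  "qpoch ((1 / q) ^ n) q n = (-1) ^ n * q powr (- (real n * (real n + 1) / 2)) * qpoch q q n"
proof -
  have "(\<Prod>j<n. 1 - q ^ (j + 1 + 0)) = qpoch q q n" by (simp add: qpoch_def)
  moreover have "- (real n * (real n + 1) / 2 + real n * real (0::nat)) = - (real n * (real n + 1) / 2)"
    by simp
  ultimately show ?thesis
    using qpoch_inverse_power_add[of n 0] prod_inverse_power[where n = n and d = 0] by (simp only: add_0_right)
qed

lemma qpoch_inverse_power_Suc:
  "qpoch ((1 / q) ^ Suc n) q n
   = (-1) ^ n * q powr (- (real n * (real n + 3) / 2)) * (qpoch q q (Suc n) / (1 - q))"
proof -
  have "(\<Prod>j<n. 1 - q ^ (j + 1 + 1)) = qpoch (q * q) q n" by (simp add: qpoch_def mult_ac)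
  also have "\<dots> = qpoch q q (Suc n) / (1 - q)" using q_less_1 by (simp add: qpoch_Suc_shift)
  finally have "(\<Prod>j<n. 1 - q ^ (j + 1 + 1)) = qpoch q q (Suc n) / (1 - q)" .
  moreover have "- (real n * (real n + 1) / 2 + real n * real (1::nat)) = - (real n * (real n + 3) / 2)"
    by (simp add: field_simps)
  moreover have "n + 1 = Suc n" by simp
  ultimately show ?thesis
    using qpoch_inverse_power_add[of n 1] prod_inverse_power[where n = n and d = 1] by (simp only:)
qed

definition qroot_poly :: "nat \<Rightarrow> nat \<Rightarrow> real poly" where
  "qroot_poly d i = root_poly (\<lambda>j. q ^ (d + j + 1)) i"

lemma poly_qroot_poly:
  "poly (qroot_poly d i) ((1 / q) ^ k) = (1 / q) ^ (k * i) * (\<Prod>j<i. 1 - q * q ^ (k + d + j))"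
proof -
  have "poly (qroot_poly d i) ((1 / q) ^ k) = (\<Prod>j<i. (1 / q) ^ k * (1 - q * q ^ (k + d + j)))"
    unfolding qroot_poly_def root_poly_def poly_prod
    using inverse_power_mult_power[of k] by (intro prod.cong) (auto simp: algebra_simps power_add)
  then show ?thesis by (simp add: prod.distrib power_mult)
qed

lemma degree_qroot_poly_le: "degree (qroot_poly d i) \<le> i"
  unfolding qroot_poly_def by (rule degree_root_poly_le)

lemma coeff_qroot_poly_self: "coeff (qroot_poly d i) i = 1"
  unfolding qroot_poly_def by (rule coeff_root_poly_self)

lemma powr_real_power: "q ^ n = q powr real n"
  using q_pos by (simp add: powr_realpow)

section \<open>The moments s\<close>

text \<open>Up to a factor depending only on n, s_coeff n k is the coefficient b_{k,n} of the paper.\<close>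
definition s_coeff :: "nat \<Rightarrow> nat \<Rightarrow> real" where
  "s_coeff n k = (if k \<le> n then (-1) ^ k * qbinom q n k * q powr (real k ^ 2 + real k / 2) / qpoch q q k
                  else 0)"

definition s_sqnorm :: "nat \<Rightarrow> real" where
  "s_sqnorm n = (qpoch q q n)\<^sup>2 * q powr (- 2 * real n ^ 2 - 2 * real n - 1/2)"

lemma s_coeff_mult_mom_s:
  assumes "k \<le> n"
  shows "s_coeff n k * mom_s q (i + k)
       = q powr (- (real (i + 1))\<^sup>2 / 2)
         * ((-1) ^ k * qbinom_ext n k * qtri k * poly (qroot_poly 0 i) ((1 / q) ^ k))"
proof -
  have pk: "qpoch q q k \<noteq> 0" using qpoch_pos[of k] by simp
  have e: "q powr (real k ^ 2 + real k / 2) * q powr (- (real (i + k + 1))\<^sup>2 / 2)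
        = q powr (- (real (i + 1))\<^sup>2 / 2) * qtri k * (1 / q) ^ (k * i)"
    unfolding inverse_power_eq_powr qtri_def powr_add[symmetric]
    by (rule arg_cong[where f = "(powr) q"]) (simp add: field_simps power2_eq_square)
  let ?P = "\<Prod>j<i. 1 - q * q ^ (k + j)"
  have "s_coeff n k * mom_s q (i + k)
      = (-1) ^ k * qbinom q n k * ?P
        * (q powr (real k ^ 2 + real k / 2) * q powr (- (real (i + k + 1))\<^sup>2 / 2))"
    unfolding s_coeff_def mom_s_def qpoch_add[of q q k i, unfolded add.commute[of k i]]
    using assms pk by simp
  also have "\<dots> = q powr (- (real (i + 1))\<^sup>2 / 2)
         * ((-1) ^ k * qbinom_ext n k * qtri k * poly (qroot_poly 0 i) ((1 / q) ^ k))"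
    unfolding e poly_qroot_poly[where d = 0, unfolded add_0_right] using assms
    by (simp add: qbinom_ext_def mult_ac)
  finally show ?thesis .
qed

lemma s_moment_sum:
  "(\<Sum>j\<le>n. s_coeff n j * mom_s q (i + j)) = q powr (- (real (i + 1))\<^sup>2 / 2) * qdiff n (qroot_poly 0 i)"
  unfolding qdiff_def sum_distrib_left by (intro sum.cong refl) (simp add: s_coeff_mult_mom_s)

lemma s_orthogonal: "i < n \<Longrightarrow> (\<Sum>j\<le>n. s_coeff n j * mom_s q (i + j)) = 0"
  unfolding s_moment_sum using degree_qroot_poly_le[of 0 i]
  by (subst qdiff_degree_le) (auto simp: coeff_eq_0)

lemma s_coeff_self: "s_coeff n n = (-1) ^ n * q powr (real n ^ 2 + real n / 2) / qpoch q q n"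
  by (simp add: s_coeff_def)

lemma s_sqnorm_eq: "(\<Sum>j\<le>n. s_coeff n j * mom_s q (n + j)) / s_coeff n n = s_sqnorm n"
proof -
  have pn: "qpoch q q n > 0" by (rule qpoch_pos)
  have diag: "(\<Sum>j\<le>n. s_coeff n j * mom_s q (n + j))
      = q powr (- (real (n + 1))\<^sup>2 / 2) * qpoch ((1 / q) ^ n) q n"
    unfolding s_moment_sum using degree_qroot_poly_le[of 0 n]
    by (subst qdiff_degree_le) (auto simp: coeff_qroot_poly_self)
  have e: "q powr (- (real (n + 1))\<^sup>2 / 2) * q powr (- (real n * (real n + 1) / 2))
      = q powr (- 2 * real n ^ 2 - 2 * real n - 1/2) * q powr (real n ^ 2 + real n / 2)"
    unfolding powr_add[symmetric]
    by (rule arg_cong[where f = "(powr) q"]) (simp add: field_simps power2_eq_square)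
  have "(\<Sum>j\<le>n. s_coeff n j * mom_s q (n + j)) / s_coeff n n
      = (q powr (- (real (n + 1))\<^sup>2 / 2) * q powr (- (real n * (real n + 1) / 2)))
        * (qpoch q q n * qpoch q q n) / q powr (real n ^ 2 + real n / 2) * ((-1) ^ n * (-1) ^ n)"
    unfolding diag qpoch_inverse_power_self s_coeff_self using pn by (simp add: field_simps)
  also have "\<dots> = s_sqnorm n" unfolding e s_sqnorm_def
    by (simp add: power2_eq_square power_mult_distrib[symmetric])
  finally show ?thesis .
qed

lemma s_sqnorm_pos: "s_sqnorm n > 0"
  unfolding s_sqnorm_def using qpoch_pos[of n] q_pos by simp

sublocale s: orthogonal_coefficients "mom_s q" s_coeff
proof
  show "k < j \<Longrightarrow> s_coeff k j = 0" for k j by (simp add: s_coeff_def)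
qed (simp_all add: s_orthogonal s_sqnorm_eq s_sqnorm_pos)

section \<open>The modified moments s~\<close>

text \<open>st_coeff n k is the coefficient b~_{k,n} of the paper divided by C~_n.\<close>
definition st_coeff :: "nat \<Rightarrow> nat \<Rightarrow> real" where
  "st_coeff n k = (if k \<le> n then (-1) ^ k * qbinom q n k * q powr (real k ^ 2 + real k / 2) / qpoch q q (k + 1)
                     * (1 - q ^ (k + 1) - (1 - q ^ k) * (1 - q ^ (n + 1)))
                   else 0)"

definition st_aux_poly :: "nat \<Rightarrow> nat \<Rightarrow> real poly" where
  "st_aux_poly n i = [:1 - q - q ^ (n + 1), q ^ (n + 1):] * qroot_poly 1 i"

lemma degree_st_aux_poly_le: "degree (st_aux_poly n i) \<le> Suc i"
proof -
  have "degree (st_aux_poly n i) \<le> degree [:1 - q - q ^ (n + 1), q ^ (n + 1):] + degree (qroot_poly 1 i)"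
    unfolding st_aux_poly_def by (rule degree_mult_le)
  also have "\<dots> \<le> 1 + i" using degree_qroot_poly_le[of 1 i] by (intro add_mono) auto
  finally show ?thesis by simp
qed

lemma coeff_st_aux_poly_top: "coeff (st_aux_poly n i) (Suc i) = q ^ (n + 1)"
proof -
  have "coeff (qroot_poly 1 i) (Suc i) = 0"
    using degree_qroot_poly_le[of 1 i] by (simp add: coeff_eq_0)
  then show ?thesis unfolding st_aux_poly_def coeff_linear_mult by (simp add: coeff_qroot_poly_self)
qed

lemma coeff_st_aux_poly_self:
  "coeff (st_aux_poly n i) i = 1 - q - q ^ (n + 1) - q ^ (n + 1) * (\<Sum>j<i. q ^ (j + 2))"
proof (cases i)
  case 0
  then show ?thesis by (simp add: st_aux_poly_def coeff_linear_mult coeff_qroot_poly_self)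
next
  case (Suc m)
  then show ?thesis
    unfolding st_aux_poly_def coeff_linear_mult qroot_poly_def
    by (simp add: coeff_root_poly_self coeff_root_poly_pred algebra_simps)
qed

lemma st_coeff_mult_mom_s:
  assumes "k \<le> n"
  shows "st_coeff n k * mom_s q (Suc i + k)
       = q powr (- (real (i + 2))\<^sup>2 / 2)
         * ((-1) ^ k * qbinom_ext n k * qtri k * poly (st_aux_poly n i) ((1 / q) ^ k))"
proof -
  have pk: "qpoch q q (k + 1) \<noteq> 0" using qpoch_pos[of "k + 1"] by simp
  let ?P = "\<Prod>j<i. 1 - q * q ^ (k + 1 + j)"
  let ?L = "1 - q - q ^ (n + 1) + q ^ (n + 1) * (1 / q) ^ k"
  have factor: "1 - q ^ (k + 1) - (1 - q ^ k) * (1 - q ^ (n + 1)) = q ^ k * ?L"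
    using inverse_power_mult_power[of k] by (simp add: algebra_simps power_add)
  have qp: "qpoch q q (Suc i + k) = qpoch q q (k + 1) * ?P"
    using qpoch_add[of q q "k + 1" i] by (simp add: add.commute)
  have e: "q powr (real k ^ 2 + real k / 2) * q powr (- (real (Suc i + k + 1))\<^sup>2 / 2) * q ^ k
        = q powr (- (real (i + 2))\<^sup>2 / 2) * qtri k * (1 / q) ^ (k * i)"
    unfolding inverse_power_eq_powr powr_real_power qtri_def powr_add[symmetric]
    by (rule arg_cong[where f = "(powr) q"]) (simp add: field_simps power2_eq_square)
  have "st_coeff n k * mom_s q (Suc i + k)
      = (-1) ^ k * qbinom q n k * ?P * ?L
        * (q powr (real k ^ 2 + real k / 2) * q powr (- (real (Suc i + k + 1))\<^sup>2 / 2) * q ^ k)"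
    unfolding st_coeff_def mom_s_def qp factor using assms pk by (simp add: field_simps)
  also have "\<dots> = q powr (- (real (i + 2))\<^sup>2 / 2)
         * ((-1) ^ k * qbinom_ext n k * qtri k * poly (st_aux_poly n i) ((1 / q) ^ k))"
    unfolding e st_aux_poly_def poly_mult poly_qroot_poly using assms
    by (simp add: qbinom_ext_def mult_ac)
  finally show ?thesis .
qed

lemma st_moment_sum_Suc:
  "(\<Sum>j\<le>n. st_coeff n j * mom_st q (Suc i + j))
   = q powr (- (real (i + 2))\<^sup>2 / 2) * qdiff n (st_aux_poly n i)"
  unfolding qdiff_def sum_distrib_left
proof (intro sum.cong refl)
  fix j assume "j \<in> {..n}"
  then show "st_coeff n j * mom_st q (Suc i + j)
      = q powr (- (real (i + 2))\<^sup>2 / 2)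
        * ((-1) ^ j * qbinom_ext n j * qtri j * poly (st_aux_poly n i) ((1 / q) ^ j))"
    using st_coeff_mult_mom_s[of j n i] by (simp only: mom_st_def) simp
qed

lemma st_orthogonal_Suc: "Suc i < n \<Longrightarrow> (\<Sum>j\<le>n. st_coeff n j * mom_st q (Suc i + j)) = 0"
  unfolding st_moment_sum_Suc using degree_st_aux_poly_le[of n i]
  by (subst qdiff_degree_le) (auto simp: coeff_eq_0)

lemma st_moment_sum_next:
  "(\<Sum>j\<le>n. st_coeff n j * mom_st q (Suc n + j))
   = q powr (- (real (n + 2))\<^sup>2 / 2)
     * ((1 - q - q ^ (n + 1) - q ^ (n + 1) * (\<Sum>j<n. q ^ (j + 2))) * qpoch ((1 / q) ^ n) q n
        + q ^ (n + 1) * qpoch ((1 / q) ^ Suc n) q n)"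
  unfolding st_moment_sum_Suc using degree_st_aux_poly_le[of n n]
  by (subst qdiff_degree_le_Suc) (auto simp: coeff_st_aux_poly_top coeff_st_aux_poly_self)

lemma alternating_qbinom_sum: "0 < n \<Longrightarrow> (\<Sum>k\<le>n. (-1) ^ k * qtri k * qbinom q n k) = 0"
proof -
  assume "0 < n"
  have "(\<Sum>k\<le>n. (-1) ^ k * qtri k * qbinom q n k) = (\<Sum>k\<le>n. (-1) ^ k * qbinom_ext n k * qtri k * 1 ^ k)"
    by (intro sum.cong refl) (simp add: qbinom_ext_def)
  also have "\<dots> = qpoch 1 q n" by (rule q_binomial)
  also have "\<dots> = 0" unfolding qpoch_def using \<open>0 < n\<close> by (intro prod_zero) (auto intro!: bexI[of _ 0])
  finally show ?thesis .
qed

lemma alternating_qbinom_Suc_sum: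
  assumes "0 < n"
  shows "(\<Sum>k\<le>n. (-1) ^ k * qtri k * (qbinom q (Suc n) (Suc k) * (1 - q ^ k))) = q - 1"
proof -
  let ?f = "[:-1, q:]"
  define t where "t m = (-1) ^ m * qbinom_ext (Suc n) m * qtri m * poly ?f ((1 / q) ^ m)" for m
  have summand: "(-1) ^ k * qtri k * (qbinom q (Suc n) (Suc k) * (1 - q ^ k)) = - t (Suc k)"
    if "k \<le> n" for k
  proof -
    have "q ^ k * (q * (1 / q) ^ Suc k) = 1" using q_pos by (simp add: power_one_over)
    then show ?thesis unfolding t_def qtri_Suc using that by (simp add: qbinom_ext_def algebra_simps)
  qed
  have "(\<Sum>k\<le>n. (-1) ^ k * qtri k * (qbinom q (Suc n) (Suc k) * (1 - q ^ k))) = - (\<Sum>k\<le>n. t (Suc k))"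
    by (simp add: summand sum_negf)
  also have "(\<Sum>k\<le>n. t (Suc k)) = qdiff (Suc n) ?f - t 0"
    unfolding qdiff_def t_def by (subst sum.atMost_Suc_shift) simp
  also have "qdiff (Suc n) ?f = 0"
    using assms by (subst qdiff_degree_le) (auto simp: coeff_pCons split: nat.split)
  also have "t 0 = q - 1" by (simp add: t_def qbinom_ext_def)
  finally show ?thesis by simp
qed

lemma st_coeff_mult_mom_s_same:
  assumes "k \<le> n"
  shows "st_coeff n k * mom_s q k
       = q powr (-1/2) * ((-1) ^ k * qtri k * (qbinom q n k - qbinom q (Suc n) (Suc k) * (1 - q ^ k)))"
proof -
  have pk: "qpoch q q k > 0" by (rule qpoch_pos)
  have nz: "1 - q ^ (k + 1) \<noteq> 0" using power_Suc_less_1[of k] by simp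
  have e: "q powr (real k ^ 2 + real k / 2) * q powr (- (real (k + 1))\<^sup>2 / 2) = q powr (-1/2) * qtri k"
    unfolding qtri_def powr_add[symmetric]
    by (rule arg_cong[where f = "(powr) q"]) (simp add: field_simps power2_eq_square)
  have "st_coeff n k * mom_s q k
      = (-1) ^ k * qbinom q n k * (q powr (real k ^ 2 + real k / 2) * q powr (- (real (k + 1))\<^sup>2 / 2))
        * ((1 - q ^ (k + 1) - (1 - q ^ k) * (1 - q ^ (n + 1))) / (1 - q ^ (k + 1)))"
    unfolding st_coeff_def mom_s_def using assms pk nz by (simp add: qpoch_Suc field_simps)
  also have "\<dots> = q powr (-1/2) * ((-1) ^ k * qtri k * (qbinom q n k - qbinom q (Suc n) (Suc k) * (1 - q ^ k)))"
    unfolding e qbinom_Suc_Suc_eq[OF assms] using nz by (simp add: field_simps)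
  finally show ?thesis .
qed

text \<open>The change s~_0 = s_0 - q^(-1/2) (1 - q) of the first moment is exactly compensated by the
  two alternating q-binomial sums.\<close>
lemma st_orthogonal_0:
  assumes "0 < n"
  shows "(\<Sum>j\<le>n. st_coeff n j * mom_st q j) = 0"
proof -
  have c0: "st_coeff n 0 = 1" using q_pos q_less_1 by (simp add: st_coeff_def qpoch_def)
  have "(\<Sum>j\<le>n. st_coeff n j * mom_st q j)
      = (\<Sum>j\<le>n. st_coeff n j * mom_s q j) + st_coeff n 0 * (mom_st q 0 - mom_s q 0)"
  proof -
    have "(\<Sum>j\<le>n. st_coeff n j * mom_st q j)
        = (\<Sum>j\<le>n. st_coeff n j * mom_s q j + (if j = 0 then st_coeff n 0 * (mom_st q 0 - mom_s q 0) else 0))"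
      by (intro sum.cong refl) (auto simp: mom_st_def algebra_simps)
    then show ?thesis by (simp add: sum.distrib)
  qed
  also have "(\<Sum>j\<le>n. st_coeff n j * mom_s q j)
      = q powr (-1/2) * ((\<Sum>k\<le>n. (-1) ^ k * qtri k * qbinom q n k)
        - (\<Sum>k\<le>n. (-1) ^ k * qtri k * (qbinom q (Suc n) (Suc k) * (1 - q ^ k))))"
  proof -
    have "(\<Sum>j\<le>n. st_coeff n j * mom_s q j) = (\<Sum>k\<le>n. q powr (-1/2)
        * ((-1) ^ k * qtri k * (qbinom q n k - qbinom q (Suc n) (Suc k) * (1 - q ^ k))))"
      by (intro sum.cong refl) (simp add: st_coeff_mult_mom_s_same)
    then show ?thesis by (simp add: sum_distrib_left sum_subtractf algebra_simps sum.distrib)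
  qed
  also have "\<dots> = q powr (-1/2) * (1 - q)"
    using alternating_qbinom_sum[OF assms] alternating_qbinom_Suc_sum[OF assms] by simp
  finally show ?thesis using c0 by (simp add: mom_st_def mom_s_def algebra_simps)
qed

lemma st_orthogonal: "i < k \<Longrightarrow> (\<Sum>j\<le>k. st_coeff k j * mom_st q (i + j)) = 0"
proof (cases i)
  case (Suc m)
  then show "i < k \<Longrightarrow> ?thesis" using st_orthogonal_Suc[of m k] by simp
qed (simp add: st_orthogonal_0)

lemma st_coeff_self: "st_coeff n n = q ^ n * s_coeff n n"
proof -
  have "1 - q ^ (n + 1) \<noteq> 0" using power_Suc_less_1[of n] by simp
  moreover have "1 - q ^ (n + 1) - (1 - q ^ n) * (1 - q ^ (n + 1)) = q ^ n * (1 - q ^ (n + 1))"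
    by (simp add: algebra_simps)
  ultimately show ?thesis
    unfolding st_coeff_def s_coeff_def using qpoch_pos[of n] by (simp add: qpoch_Suc field_simps)
qed

lemma st_diag_sum: "(\<Sum>j\<le>k. st_coeff k j * mom_st q (k + j)) = q ^ (k + 1) * (\<Sum>j\<le>k. s_coeff k j * mom_s q (k + j))"
proof (cases k)
  case 0
  then show ?thesis using q_pos q_less_1 by (simp add: st_coeff_def s_coeff_def mom_st_def mom_s_def qpoch_def)
next
  case (Suc m)
  have "(\<Sum>j\<le>k. st_coeff k j * mom_st q (k + j))
      = q powr (- (real (m + 2))\<^sup>2 / 2) * (q ^ (k + 1) * qpoch ((1 / q) ^ k) q k)"
    unfolding Suc st_moment_sum_Suc using degree_st_aux_poly_le[of "Suc m" m]
    by (subst qdiff_degree_le) (auto simp: coeff_st_aux_poly_top)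
  moreover have "(\<Sum>j\<le>k. s_coeff k j * mom_s q (k + j))
      = q powr (- (real (k + 1))\<^sup>2 / 2) * qpoch ((1 / q) ^ k) q k"
    unfolding s_moment_sum using degree_qroot_poly_le[of 0 k]
    by (subst qdiff_degree_le) (auto simp: coeff_qroot_poly_self)
  ultimately show ?thesis using Suc by (simp add: mult_ac)
qed

lemma st_sqnorm_eq: "(\<Sum>j\<le>k. st_coeff k j * mom_st q (k + j)) / st_coeff k k = q * s_sqnorm k"
  unfolding st_diag_sum st_coeff_self s_sqnorm_eq[symmetric] using q_pos by (simp add: field_simps)

sublocale st: orthogonal_coefficients "mom_st q" st_coeff
proof
  show "k < j \<Longrightarrow> st_coeff k j = 0" for k j by (simp add: st_coeff_def)
qed (simp_all add: st_orthogonal st_sqnorm_eq s_sqnorm_pos q_pos)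

section \<open>Normalisation and three-term recurrence\<close>

lemma st_sqnorm_closed: "st.sqnorm n = (qpoch q q n)\<^sup>2 * q powr (- 2 * real n ^ 2 - 2 * real n + 1/2)"
proof -
  have "q * q powr (- 2 * real n ^ 2 - 2 * real n - 1/2) = q powr 1 * q powr (- 2 * real n ^ 2 - 2 * real n - 1/2)"
    using q_pos by simp
  also have "\<dots> = q powr (- 2 * real n ^ 2 - 2 * real n + 1/2)"
    unfolding powr_add[symmetric] by (rule arg_cong[where f = "(powr) q"]) simp
  finally show ?thesis unfolding st.sqnorm_def st_sqnorm_eq s_sqnorm_def by (simp add: mult_ac)
qed

lemma st_normalizer: "1 / (st_coeff n n * sqrt (st.sqnorm n)) = (-1) ^ n * q powr (- real n / 2 - 1/4)"
proof -
  have pn: "qpoch q q n > 0" by (rule qpoch_pos)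
  have sq: "sqrt (st.sqnorm n) = qpoch q q n * q powr (- (real n ^ 2) - real n + 1/4)"
  proof (rule real_sqrt_unique)
    have "q powr (- (real n ^ 2) - real n + 1/4) * q powr (- (real n ^ 2) - real n + 1/4)
        = q powr (- 2 * real n ^ 2 - 2 * real n + 1/2)"
      unfolding powr_add[symmetric] by (rule arg_cong[where f = "(powr) q"]) simp
    then show "(qpoch q q n * q powr (- (real n ^ 2) - real n + 1/4))\<^sup>2 = st.sqnorm n"
      unfolding st_sqnorm_closed by (simp add: power2_eq_square mult_ac)
  qed (use pn in simp)
  have e: "q ^ n * q powr (real n ^ 2 + real n / 2) * q powr (- (real n ^ 2) - real n + 1/4)
          = 1 / q powr (- real n / 2 - 1/4)"
    unfolding powr_real_power powr_add[symmetric] powr_minus_divide[symmetric]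
    by (rule arg_cong[where f = "(powr) q"]) (simp add: field_simps)
  have "st_coeff n n * sqrt (st.sqnorm n)
      = (-1) ^ n * (q ^ n * q powr (real n ^ 2 + real n / 2) * q powr (- (real n ^ 2) - real n + 1/4))"
    unfolding st_coeff_self s_coeff_self sq using pn by (simp add: field_simps)
  also have "\<dots> = (-1) ^ n / q powr (- real n / 2 - 1/4)" unfolding e by simp
  finally show ?thesis by (simp add: power_one_over[symmetric] field_simps)
qed

lemma orthonormal_poly_mom_st:
  "orthonormal_poly (mom_st q) n = smult ((-1) ^ n * q powr (- real n / 2 - 1/4)) (st.orth_poly n)"
  unfolding st.orthonormal_poly_eq st_normalizer ..

lemma hankel_det_mom_st: "hankel_det (mom_st q) m = q ^ m * hankel_det (mom_s q) m"
  unfolding st.hankel_det_eq_prod_sqnorm s.hankel_det_eq_prod_sqnorm st.sqnorm_def st_sqnorm_eq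
    s.sqnorm_def s_sqnorm_eq by (simp add: prod.distrib)

lemma st_coeff_normalized:
  assumes "k \<le> n"
  shows "(-1) ^ n * q powr (- real n / 2 - 1/4) * st_coeff n k
       = (-1) ^ (n + k) * q powr (real n / 2 + 1/4) * qbinom q n k * q powr (real k ^ 2 + real k / 2)
         / qpoch q q k * q powr (- real n - 1/2) * (1 - (1 - q ^ k) * (1 - q ^ (n + 1)) / (1 - q ^ (k + 1)))"
proof -
  have nz: "1 - q ^ (k + 1) \<noteq> 0" using power_Suc_less_1[of k] by simp
  have pk: "qpoch q q k > 0" by (rule qpoch_pos)
  have e: "q powr (real n / 2 + 1/4) * q powr (- real n - 1/2) = q powr (- real n / 2 - 1/4)"
    unfolding powr_add[symmetric] by (rule arg_cong[where f = "(powr) q"]) simp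
  have "1 - (1 - q ^ k) * (1 - q ^ (n + 1)) / (1 - q ^ (k + 1))
      = (1 - q ^ (k + 1) - (1 - q ^ k) * (1 - q ^ (n + 1))) / (1 - q ^ (k + 1))"
    using nz by (simp add: field_simps)
  then have "(-1) ^ (n + k) * q powr (real n / 2 + 1/4) * qbinom q n k * q powr (real k ^ 2 + real k / 2)
         / qpoch q q k * q powr (- real n - 1/2) * (1 - (1 - q ^ k) * (1 - q ^ (n + 1)) / (1 - q ^ (k + 1)))
      = (-1) ^ (n + k) * (q powr (real n / 2 + 1/4) * q powr (- real n - 1/2)) * qbinom q n k
        * q powr (real k ^ 2 + real k / 2) / (qpoch q q k * (1 - q ^ (k + 1)))
        * (1 - q ^ (k + 1) - (1 - q ^ k) * (1 - q ^ (n + 1)))"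
    using nz pk by (simp add: field_simps)
  also have "\<dots> = (-1) ^ n * q powr (- real n / 2 - 1/4) * st_coeff n k"
    unfolding e st_coeff_def using assms by (simp add: qpoch_Suc power_add field_simps)
  finally show ?thesis by simp
qed

definition next_numerator :: "nat \<Rightarrow> real" where
  "next_numerator n = 1 - q + q ^ 2 - q ^ (n + 1) - q ^ (n + 3) + q ^ (2 * n + 3)"

lemma next_numerator_eq:
  "(1 - q - q ^ (n + 1) - q ^ (n + 1) * (\<Sum>j<n. q ^ (j + 2))) * (1 - q) + q * (1 - q ^ (n + 1))
   = next_numerator n"
proof -
  define \<sigma> where "\<sigma> = (\<Sum>j<n. q ^ (j + 2))"
  have "\<sigma> = q\<^sup>2 * (\<Sum>j<n. q ^ j)"
    unfolding \<sigma>_def sum_distrib_left by (simp add: power_add power2_eq_square mult_ac)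
  then have geometric: "\<sigma> * (1 - q) = q\<^sup>2 * (1 - q ^ n)"
    using q_less_1 by (simp add: sum_gp_strict)
  have "(1 - q - q ^ (n + 1) - q ^ (n + 1) * \<sigma>) * (1 - q) + q * (1 - q ^ (n + 1))
      = (1 - q - q ^ (n + 1)) * (1 - q) - q ^ (n + 1) * (\<sigma> * (1 - q)) + q * (1 - q ^ (n + 1))"
    by (simp add: algebra_simps)
  also have "\<dots> = next_numerator n"
    unfolding geometric next_numerator_def
    by (simp add: algebra_simps power_add power_mult power2_eq_square power3_eq_cube)
  finally show ?thesis unfolding \<sigma>_def .
qed

lemma next_numerator_Suc:
  "next_numerator (n + 1) = (1 + q ^ 3 - (1 + q ^ 2) * q ^ (n + 2)) * (1 - q) + q\<^sup>2 * next_numerator n"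
  unfolding next_numerator_def
  by (simp add: algebra_simps power_add power_mult_distrib numeral_eq_Suc power2_eq_square)

definition st_next :: "nat \<Rightarrow> real" where
  "st_next n = (qpoch q q n)\<^sup>2 * q powr (- 2 * (real n + 1)\<^sup>2) * (next_numerator n / (1 - q))"

lemma st_next_moment: "moment_functional (mom_st q) (Suc n) (st.monic n) = st_next n"
proof -
  define A where "A = q powr (- (real (n + 2))\<^sup>2 / 2)"
  define B0 where "B0 = q powr (- (real n * (real n + 1) / 2))"
  define B1 where "B1 = q powr (- (real n * (real n + 3) / 2))"
  define C where "C = q powr (real n ^ 2 + real n / 2)"
  define X where "X = q powr (- 2 * (real n + 1)\<^sup>2)"
  define N where "N = q ^ n"
  define P where "P = qpoch q q n"
  define \<beta> where "\<beta> = 1 - q - q * N - q * N * (\<Sum>j<n. q ^ (j + 2))"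
  have q10: "1 - q \<noteq> 0" using q_less_1 by simp
  have e1: "A * B0 = X * N * C"
    unfolding A_def B0_def X_def N_def C_def powr_real_power powr_add[symmetric]
    by (rule arg_cong[where f = "(powr) q"]) (simp add: field_simps power2_eq_square)
  have e2: "A * B1 = X * C"
    unfolding A_def B1_def X_def C_def powr_add[symmetric]
    by (rule arg_cong[where f = "(powr) q"]) (simp add: field_simps power2_eq_square)
  have Q0: "qpoch ((1 / q) ^ n) q n = (-1) ^ n * B0 * P"
    unfolding B0_def P_def by (rule qpoch_inverse_power_self)
  have Q1: "qpoch ((1 / q) ^ Suc n) q n = (-1) ^ n * B1 * (P * (1 - q * N) / (1 - q))"
    unfolding B1_def P_def N_def using qpoch_inverse_power_Suc[of n] by (simp add: qpoch_Suc)
  have "(\<Sum>j\<le>n. st_coeff n j * mom_st q (Suc n + j))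
      = A * (\<beta> * qpoch ((1 / q) ^ n) q n + q * N * qpoch ((1 / q) ^ Suc n) q n)"
    unfolding st_moment_sum_next A_def \<beta>_def N_def by simp
  also have "\<dots> = (-1) ^ n * P * (\<beta> * (A * B0) + q * N * (A * B1) * (1 - q * N) / (1 - q))"
    unfolding Q0 Q1 using q10 by (simp add: field_simps)
  also have "\<dots> = (-1) ^ n * P * X * N * C * ((\<beta> * (1 - q) + q * (1 - q * N)) / (1 - q))"
    unfolding e1 e2 using q10 by (simp add: field_simps)
  also have "\<beta> * (1 - q) + q * (1 - q * N) = next_numerator n"
    using next_numerator_eq[of n] by (simp add: \<beta>_def N_def)
  finally have num: "(\<Sum>j\<le>n. st_coeff n j * mom_st q (Suc n + j))
      = (-1) ^ n * P * X * N * C * (next_numerator n / (1 - q))" .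
  have cn: "st_coeff n n = N * ((-1) ^ n * C / P)"
    unfolding st_coeff_self s_coeff_self N_def C_def P_def ..
  have "N > 0" "C > 0" "P > 0" using q_pos qpoch_pos by (auto simp: N_def C_def P_def)
  then show ?thesis
    unfolding st.moment_functional_monic num cn st_next_def P_def[symmetric] X_def[symmetric]
    using q10 by (simp add: field_simps power2_eq_square)
qed

definition rec_c :: "nat \<Rightarrow> real" where
  "rec_c n = (1 + q ^ 3 - (1 + q ^ 2) * q ^ n) * q powr (- 2 * real n - 1/2)"

definition rec_lambda :: "nat \<Rightarrow> real" where
  "rec_lambda n = (1 - q ^ n) ^ 2 * q powr (- 4 * real n)"

lemma rec_lambda_mult_st_sqnorm: "rec_lambda (n + 1) * st.sqnorm n = st.sqnorm (n + 1)"
proof -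
  have e: "q powr (- 4 * real (n + 1)) * q powr (- 2 * real n ^ 2 - 2 * real n + 1/2)
        = q powr (- 2 * real (n + 1) ^ 2 - 2 * real (n + 1) + 1/2)"
    unfolding powr_add[symmetric]
    by (rule arg_cong[where f = "(powr) q"]) (simp add: field_simps power2_eq_square)
  have p: "qpoch q q (n + 1) = qpoch q q n * (1 - q ^ (n + 1))" by (simp add: qpoch_Suc)
  show ?thesis unfolding rec_lambda_def st_sqnorm_closed p e[symmetric]
    by (simp add: power_mult_distrib mult_ac)
qed

lemma st_next_0: "st_next 0 = rec_c 1 * st.sqnorm 0"
proof -
  have "q powr (- 2 * 1 - 1/2) * q powr (1/2) = q powr (- 2)"
    unfolding powr_add[symmetric] by (rule arg_cong[where f = "(powr) q"]) simp
  moreover have "1 - q \<noteq> 0" using q_less_1 by simp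
  ultimately show ?thesis
    unfolding st_next_def next_numerator_def rec_c_def st_sqnorm_closed
    by (simp add: field_simps power2_eq_square power3_eq_cube)
qed

lemma st_next_Suc: "st_next (n + 1) = rec_c (n + 2) * st.sqnorm (n + 1) + rec_lambda (n + 1) * st_next n"
proof -
  define Y where "Y = q powr (- 2 * (real n + 2)\<^sup>2)"
  define N where "N = q ^ n"
  define P where "P = qpoch q q n"
  have q10: "1 - q \<noteq> 0" using q_less_1 by simp
  have p1: "qpoch q q (n + 1) = P * (1 - q * N)" by (simp add: qpoch_Suc P_def N_def)
  have eA: "q powr (- 2 * (real (n + 1) + 1)\<^sup>2) = Y"
    unfolding Y_def by (rule arg_cong[where f = "(powr) q"]) (simp add: field_simps power2_eq_square)
  have eB: "q powr (- 2 * real (n + 2) - 1/2) * q powr (- 2 * real (n + 1) ^ 2 - 2 * real (n + 1) + 1/2) = Y"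
    unfolding Y_def powr_add[symmetric]
    by (rule arg_cong[where f = "(powr) q"]) (simp add: field_simps power2_eq_square)
  have eC: "q powr (- 4 * real (n + 1)) * q powr (- 2 * (real n + 1)\<^sup>2) = q\<^sup>2 * Y"
  proof -
    have "q powr (- 4 * real (n + 1)) * q powr (- 2 * (real n + 1)\<^sup>2) = q powr (2 + (- 2 * (real n + 2)\<^sup>2))"
      unfolding powr_add[symmetric] by (rule arg_cong[where f = "(powr) q"]) (simp add: field_simps power2_eq_square)
    then show ?thesis unfolding Y_def powr_add using powr_realpow[OF q_pos, of 2] by simp
  qed
  have L: "st_next (n + 1) = (P * (1 - q * N))\<^sup>2 * Y * (next_numerator (n + 1) / (1 - q))"
    unfolding st_next_def p1 eA ..
  have R1: "rec_c (n + 2) * st.sqnorm (n + 1) = (1 + q ^ 3 - (1 + q ^ 2) * (q\<^sup>2 * N)) * (P * (1 - q * N))\<^sup>2 * Y"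
  proof -
    have "rec_c (n + 2) * st.sqnorm (n + 1) = (1 + q ^ 3 - (1 + q ^ 2) * q ^ (n + 2)) * (P * (1 - q * N))\<^sup>2
         * (q powr (- 2 * real (n + 2) - 1/2) * q powr (- 2 * real (n + 1) ^ 2 - 2 * real (n + 1) + 1/2))"
      unfolding rec_c_def st_sqnorm_closed p1 by (simp only: mult_ac)
    then show ?thesis unfolding eB N_def by (simp add: power_add mult_ac power2_eq_square)
  qed
  have R2: "rec_lambda (n + 1) * st_next n = (1 - q * N)\<^sup>2 * P\<^sup>2 * (q\<^sup>2 * Y) * (next_numerator n / (1 - q))"
  proof -
    have "rec_lambda (n + 1) * st_next n = (1 - q ^ (n + 1))\<^sup>2 * P\<^sup>2
        * (q powr (- 4 * real (n + 1)) * q powr (- 2 * (real n + 1)\<^sup>2)) * (next_numerator n / (1 - q))"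
      unfolding rec_lambda_def st_next_def P_def by (simp only: mult_ac)
    then show ?thesis unfolding eC N_def by simp
  qed
  have "q ^ (n + 2) = q\<^sup>2 * N" by (simp add: N_def power_add power2_eq_square)
  then have key: "next_numerator (n + 1) / (1 - q)
      = (1 + q ^ 3 - (1 + q ^ 2) * (q\<^sup>2 * N)) + q\<^sup>2 * (next_numerator n / (1 - q))"
    using q10 next_numerator_Suc[of n] by (simp add: field_simps)
  show ?thesis unfolding L R1 R2 key by (simp add: algebra_simps power2_eq_square)
qed

lemma st_monic_1: "st.monic 1 = [:- rec_c 1, 1:] * st.monic 0"
  by (rule st.monic_1) (simp add: st_next_moment[of 0, simplified] st_next_0)

lemma st_monic_recurrence:
  "st.monic (n + 2) = [:- rec_c (n + 2), 1:] * st.monic (n + 1) - smult (rec_lambda (n + 1)) (st.monic n)"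
proof (rule st.monic_three_term_recurrence[OF rec_lambda_mult_st_sqnorm])
  have "moment_functional (mom_st q) (n + 2) (st.monic (n + 1)) = st_next (n + 1)"
    using st_next_moment[of "n + 1"] by simp
  moreover have "moment_functional (mom_st q) (n + 1) (st.monic n) = st_next n"
    using st_next_moment[of n] by simp
  ultimately show "moment_functional (mom_st q) (n + 2) (st.monic (n + 1))
      = rec_c (n + 2) * st.sqnorm (n + 1) + rec_lambda (n + 1) * moment_functional (mom_st q) (n + 1) (st.monic n)"
    by (simp only: st_next_Suc)
qed

end

theorem corollary1:
  fixes q :: real
  assumes "0 < q" and "q < 1"
  defines "b \<equiv> (\<lambda>k n::nat. (-1) ^ (n + k) * q powr (real n / 2 + 1/4) * qbinom q n k
                              * q powr (real k ^ 2 + real k / 2) / qpoch q q k)"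
      and "Ct \<equiv> (\<lambda>n::nat. (-1) ^ n * q powr (- real n / 2 - 1/4))"
      and "bt \<equiv> (\<lambda>k n::nat. coeff (orthonormal_poly (mom_st q) n) k)"
      and "pt \<equiv> (\<lambda>n::nat. smult (1 / coeff (orthonormal_poly (mom_st q) n) n)
                                   (orthonormal_poly (mom_st q) n))"
      and "ct \<equiv> (\<lambda>n::nat. (1 + q ^ 3 - (1 + q ^ 2) * q ^ n) * q powr (- 2 * real n - 1/2))"
      and "lt \<equiv> (\<lambda>n::nat. (1 - q ^ n) ^ 2 * q powr (- 4 * real n))"
  shows "(\<forall>n k. k \<le> n \<longrightarrow>
            bt k n = Ct n * (-1) ^ k * qbinom q n k * q powr (real k ^ 2 + real k / 2)
                     / qpoch q q (k + 1) * (1 - q ^ (k + 1) - (1 - q ^ k) * (1 - q ^ (n + 1))))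
       \<and> (\<forall>n k. k \<le> n \<longrightarrow>
            bt k n = b k n * q powr (- real n - 1/2)
                     * (1 - (1 - q ^ k) * (1 - q ^ (n + 1)) / (1 - q ^ (k + 1))))
       \<and> (\<forall>n. hankel_det (mom_st q) (n + 1) = q ^ (n + 1) * hankel_det (mom_s q) (n + 1))
       \<and> pt 0 = 1
       \<and> pt 1 = [:- ct 1, 1:] * pt 0
       \<and> (\<forall>n. pt (n + 2) = [:- ct (n + 2), 1:] * pt (n + 1) - smult (lt (n + 1)) (pt n))"
proof -
  interpret q_setting q using assms(1,2) by unfold_locales
  have orthonormal: "orthonormal_poly (mom_st q) n = smult (Ct n) (st.orth_poly n)" for n
    unfolding orthonormal_poly_mom_st assms(4) ..
  have bt: "bt k n = Ct n * st_coeff n k" if "k \<le> n" for k n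
    unfolding assms(5) orthonormal using that by (simp add: st.orth_poly_def coeff_sum_monom)
  have "pt = st.monic"
    unfolding assms(4,6) st.monic_def orthonormal using assms(1)
    by (simp add: fun_eq_iff st.orth_poly_def coeff_sum_monom smult_smult)
  moreover have "ct = rec_c" "lt = rec_lambda"
    unfolding assms(7,8) by (simp_all add: fun_eq_iff rec_c_def rec_lambda_def)
  moreover have "\<forall>n k. k \<le> n \<longrightarrow>
      bt k n = Ct n * (-1) ^ k * qbinom q n k * q powr (real k ^ 2 + real k / 2)
               / qpoch q q (k + 1) * (1 - q ^ (k + 1) - (1 - q ^ k) * (1 - q ^ (n + 1)))"
    using bt by (simp add: st_coeff_def)
  moreover have "\<forall>n k. k \<le> n \<longrightarrow>
      bt k n = b k n * q powr (- real n - 1/2) * (1 - (1 - q ^ k) * (1 - q ^ (n + 1)) / (1 - q ^ (k + 1)))"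
    using bt st_coeff_normalized unfolding assms(3,4) by simp
  ultimately show ?thesis
    using hankel_det_mom_st st.monic_0 st_monic_1 st_monic_recurrence by simp
qed

end
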